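(* Let $M$ and $M'$ be as described in the context, with the same initial-state distribution $\rho$ on $S$ and horizon $T$. For every policy $\pi'=(\pi'_1,\dots,\pi'_n)$ on $M'$, \[ V'_{\pi'}(\rho) = V_{\phi(\pi')}(\rho). \]
   Context: Fix integers $n\ge 1$ (agents/radars), $m\ge 1$ (targets), a horizon $T\ge 1$, and write $[m]=\{1,\dots,m\}$ and $\dagger$ for an extra "stop" symbol not in $[m]$. Let $S$ be a finite state space, $\Omega_1,\dots,\Omega_n$ finite individual observation sets, $O(\omega\mid s)$ a probability distribution on $\Omega_1\times\dots\times\Omega_n$ for each $s\in S$, $P(s,\varepsilon,\cdot)$ a probability distribution on $S$ for each $s\in S$ and joint action $\varepsilon=(\varepsilon_1,\dots,\varepsilon_n)\in\mathcal P([m])^n$, and $R:S\times\mathcal P([m])^n\times S\to\mathbb R$ a reward function. The original Dec-POMDP $M$: agent $j$'s action is a subset $\varepsilon_j\subseteq[m]$ (the set of targets it tracks). A policy on $M$ is $\pi=(\pi_1,\dots,\pi_n)$ with each $\pi_j(\cdot\mid\omega_j)$ a probability distribution on $\mathcal P([m])$ for each $\omega_j\in\Omega_j$. Dynamics: $s_0\sim\rho$; at each step $t=0,\dots,T-1$, an observation $\omega_t=(\omega_{t,1},\dots,\omega_{t,n})\sim O(\cdot\mid s_t)$ is drawn, each agent independently draws $\varepsilon_{t,j}\sim\pi_j(\cdot\mid\omega_{t,j})$, then $s_{t+1}\sim P(s_t,\varepsilon_t,\cdot)$ and reward $R(s_t,\varepsilon_t,s_{t+1})$ is received. $V_\pi(\rho)=\mathbb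 E\big[\sum_{t=0}^{T-1}R(s_t,\varepsilon_t,s_{t+1})\big]$. The sequential-choice Dec-POMDP $M'$: its states are pairs $s\otimes\varepsilon$ of an underlying state $s\in S$ and a tuple of partial selections $\varepsilon=(\varepsilon_1,\dots,\varepsilon_n)$, $\varepsilon_j\subseteq[m]$, together with a flag per agent saying whether it has finished. A policy on $M'$ is $\pi'=(\pi'_1,\dots,\pi'_n)$ where, for each $\omega_j\in\Omega_j$ and $E\subseteq[m]$, $\pi'_j(\cdot\mid\omega_j,E)$ is a probability distribution on $([m]\setminus E)\cup\{\dagger\}$. Dynamics: $s_0\sim\rho$; each round $t=0,\dots,T-1$ proceeds as follows. An observation $\omega_t\sim O(\cdot\mid s_t)$ is drawn and stays fixed during the round; all $\varepsilon_j$ start at $\varnothing$ and no agent is finished. At each micro-step, every unfinished agent $j$ independently draws $a_j\sim\pi'_j(\cdot\mid\omega_{t,j},\varepsilon_j)$; if $a_j\in[m]$ then $\varepsilon_j\leftarrow\varepsilon_j\cup\{a_j\}$, and if $a_j=\dagger$ agent $j$ becomes finished; the underlying state does not change and reward $0$ is received. (Since chosen targets cannot be rechosen, each agent finishes after at most $m+1$ micro-steps.) When all agents are finished with selections $\varepsilon=(\varepsilon_1,\dots,\varepsilon_n)$, the underlying state moves to $s_{t+1}\sim P(s_t,\varepsilon,\cdot)$, reward $R(s_t,\varepsilon,s_{t+1})$ is received, and the selections are reset to $\varnothing$. $V'_{\pi'}(\rho)$ is the expected total reward received over the $T$ rounds. Policy transposition: for a policy $\pi'$ on $M'$, $\phi(\pi')$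 is the policy on $M$ with, for each agent $j$, $\omega\in\Omega_j$ and $\varepsilon\subseteq[m]$ with $|\varepsilon|=p$, \[\phi_j(\pi')(\varepsilon\mid\omega)=\sum_{(i_1,\dots,i_p)}\Big(\prod_{l=0}^{p-1}\pi'_j\big(i_{l+1}\mid\omega,\{i_1,\dots,i_l\}\big)\Big)\,\pi'_j(\dagger\mid\omega,\varepsilon),\] where the sum ranges over all $p!$ orderings $(i_1,\dots,i_p)$ of the elements of $\varepsilon$ (for $\varepsilon=\varnothing$ this is $\pi'_j(\dagger\mid\omega,\varnothing)$). *)

theory Defs
  imports "HOL-Probability.Probability" "HOL-Combinatorics.Multiset_Permutations"
begin

(* Conventions:
   - agents are 0..<n, targets are [m] = {1..m} (naturals);
   - a joint observation is a function  nat => 'o  (component j = omega_j);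
   - a joint action is a function  nat => nat set  (component j = epsilon_j, {} for j >= n);
   - the stop symbol dagger is  None,  target i is  Some i. *)

type_synonym 'o obs = "nat \<Rightarrow> 'o"
type_synonym jact = "nat \<Rightarrow> nat set"

fun round_value ::
  "('s \<Rightarrow> 'o obs pmf) \<Rightarrow> ('s \<Rightarrow> jact \<Rightarrow> 's pmf) \<Rightarrow> ('s \<Rightarrow> jact \<Rightarrow> 's \<Rightarrow> real)
   \<Rightarrow> ('o obs \<Rightarrow> jact pmf) \<Rightarrow> nat \<Rightarrow> 's \<Rightarrow> real" where
  "round_value Obs P R A 0 s = 0"
| "round_value Obs P R A (Suc t) s =
     measure_pmf.expectation (Obs s) (\<lambda>\<omega>.
       measure_pmf.expectation (A \<omega>) (\<lambda>\<epsilon>.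
         measure_pmf.expectation (P s \<epsilon>) (\<lambda>s'. R s \<epsilon> s' + round_value Obs P R A t s')))"

definition joint_action_M :: "nat \<Rightarrow> (nat \<Rightarrow> 'o \<Rightarrow> nat set pmf) \<Rightarrow> 'o obs \<Rightarrow> jact pmf" where
  "joint_action_M n \<pi> \<omega> = Pi_pmf {..<n} {} (\<lambda>j. \<pi> j (\<omega> j))"

definition V_M ::
  "nat \<Rightarrow> nat \<Rightarrow> 's pmf \<Rightarrow> ('s \<Rightarrow> 'o obs pmf) \<Rightarrow> ('s \<Rightarrow> jact \<Rightarrow> 's pmf)
   \<Rightarrow> ('s \<Rightarrow> jact \<Rightarrow> 's \<Rightarrow> real) \<Rightarrow> (nat \<Rightarrow> 'o \<Rightarrow> nat set pmf) \<Rightarrow> real" where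
  "V_M n T \<rho> Obs P R \<pi> =
     measure_pmf.expectation \<rho> (round_value Obs P R (joint_action_M n \<pi>) T)"

text \<open>A micro-state is (partial selections, finished flags).
  In one micro-step every unfinished agent j independently draws a_j ~ pi' j (omega j) (eps j);
  finished agents do nothing (modelled by drawing None deterministically, which leaves
  their selection and flag unchanged).\<close>
definition micro_step ::
  "nat \<Rightarrow> (nat \<Rightarrow> 'o \<Rightarrow> nat set \<Rightarrow> nat option pmf) \<Rightarrow> 'o obs
   \<Rightarrow> jact \<times> (nat \<Rightarrow> bool) \<Rightarrow> (jact \<times> (nat \<Rightarrow> bool)) pmf" where
  "micro_step n \<pi>' \<omega> st =
     map_pmf (\<lambda>a. (\<lambda>j. case a j of Some i \<Rightarrow> insert i (fst st j) | None \<Rightarrow> fst st j,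
                    \<lambda>j. snd st j \<or> a j = None))
       (Pi_pmf {..<n} None
          (\<lambda>j. if snd st j then return_pmf None else \<pi>' j (\<omega> j) (fst st j)))"

fun micro_steps ::
  "nat \<Rightarrow> (nat \<Rightarrow> 'o \<Rightarrow> nat set \<Rightarrow> nat option pmf) \<Rightarrow> 'o obs \<Rightarrow> nat
   \<Rightarrow> jact \<times> (nat \<Rightarrow> bool) \<Rightarrow> (jact \<times> (nat \<Rightarrow> bool)) pmf" where
  "micro_steps n \<pi>' \<omega> 0 st = return_pmf st"
| "micro_steps n \<pi>' \<omega> (Suc k) st = bind_pmf (micro_step n \<pi>' \<omega> st) (micro_steps n \<pi>' \<omega> k)"

text \<open>Every agent finishes within m+1 micro-steps and finished configurations are fixed points,
  so m+1 micro-steps reach the state where all agents are finished.\<close>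
definition joint_action_M' ::
  "nat \<Rightarrow> nat \<Rightarrow> (nat \<Rightarrow> 'o \<Rightarrow> nat set \<Rightarrow> nat option pmf) \<Rightarrow> 'o obs \<Rightarrow> jact pmf" where
  "joint_action_M' n m \<pi>' \<omega> =
     map_pmf fst (micro_steps n \<pi>' \<omega> (Suc m) (\<lambda>_. {}, \<lambda>_. False))"

definition V_M' ::
  "nat \<Rightarrow> nat \<Rightarrow> nat \<Rightarrow> 's pmf \<Rightarrow> ('s \<Rightarrow> 'o obs pmf) \<Rightarrow> ('s \<Rightarrow> jact \<Rightarrow> 's pmf)
   \<Rightarrow> ('s \<Rightarrow> jact \<Rightarrow> 's \<Rightarrow> real) \<Rightarrow> (nat \<Rightarrow> 'o \<Rightarrow> nat set \<Rightarrow> nat option pmf) \<Rightarrow> real" where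
  "V_M' n m T \<rho> Obs P R \<pi>' =
     measure_pmf.expectation \<rho> (round_value Obs P R (joint_action_M' n m \<pi>') T)"

definition valid_policy' :: "nat \<Rightarrow> nat \<Rightarrow> (nat \<Rightarrow> 'o \<Rightarrow> nat set \<Rightarrow> nat option pmf) \<Rightarrow> bool" where
  "valid_policy' n m \<pi>' \<longleftrightarrow>
     (\<forall>j<n. \<forall>\<omega> E. E \<subseteq> {1..m} \<longrightarrow>
        set_pmf (\<pi>' j \<omega> E) \<subseteq> insert None (Some ` ({1..m} - E)))"

definition phi_weight ::
  "nat \<Rightarrow> (nat \<Rightarrow> 'o \<Rightarrow> nat set \<Rightarrow> nat option pmf) \<Rightarrow> nat \<Rightarrow> 'o \<Rightarrow> nat set \<Rightarrow> real" where
  "phi_weight m \<pi>' j \<omega> \<epsilon> =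
     (if \<epsilon> \<subseteq> {1..m} then
        (\<Sum>xs\<in>permutations_of_set \<epsilon>.
           (\<Prod>l<length xs. pmf (\<pi>' j \<omega> (set (take l xs))) (Some (xs ! l))))
        * pmf (\<pi>' j \<omega> \<epsilon>) None
      else 0)"

definition phi ::
  "nat \<Rightarrow> (nat \<Rightarrow> 'o \<Rightarrow> nat set \<Rightarrow> nat option pmf) \<Rightarrow> nat \<Rightarrow> 'o \<Rightarrow> nat set pmf" where
  "phi m \<pi>' j \<omega> = embed_pmf (phi_weight m \<pi>' j \<omega>)"

end

theory Submission
  imports Defs
begin

text \<open>
  In one round of \<open>M'\<close> the agents run independent Markov chains on pairs (selection, finished),
  agent \<open>j\<close> being driven by \<open>\<pi>'\<^sub>j(\<omega>\<^sub>j, \<cdot>)\<close>; the joint micro-step chain, read agent by agent,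
  is the product of these chains. For one agent, the probability of stopping with selection
  \<open>\<epsilon>\<close> when started from \<open>E \<subseteq> \<epsilon>\<close> is the sum over all orderings of \<open>\<epsilon> - E\<close> of the product
  of the choice probabilities, times the stop probability at \<open>\<epsilon>\<close>: this weight satisfies the
  one-step recursion of the chain, and \<open>m + 1\<close> steps suffice since every step that does not
  stop enlarges the selection inside \<open>[m]\<close>. From \<open>E = {}\<close> the weight is \<open>\<phi>(\<pi>')\<^sub>j\<close>, so in
  every round both Dec-POMDPs draw their joint action from the same distribution.
\<close>

definition agent_step :: "(nat set \<Rightarrow> nat option pmf) \<Rightarrow> nat set \<times> bool \<Rightarrow> (nat set \<times> bool) pmf" where
  "agent_step q x = map_pmf (\<lambda>a. (case a of Some i \<Rightarrow> insert i (fst x) | None \<Rightarrow> fst x, snd x \<or> a = None))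
      (if snd x then return_pmf None else q (fst x))"

fun agent_steps :: "(nat set \<Rightarrow> nat option pmf) \<Rightarrow> nat \<Rightarrow> nat set \<times> bool \<Rightarrow> (nat set \<times> bool) pmf" where
  "agent_steps q 0 x = return_pmf x"
| "agent_steps q (Suc k) x = bind_pmf (agent_step q x) (agent_steps q k)"

lemma agent_steps_finished: "agent_steps q k (E, True) = return_pmf (E, True)"
  by (induction k) (simp_all add: agent_step_def bind_return_pmf)

definition ordered_choice_prob :: "(nat set \<Rightarrow> nat option pmf) \<Rightarrow> nat set \<Rightarrow> nat list \<Rightarrow> real" where
  "ordered_choice_prob q E xs = (\<Prod>l<length xs. pmf (q (E \<union> set (take l xs))) (Some (xs ! l)))"

lemma ordered_choice_prob_Nil [simp]: "ordered_choice_prob q E [] = 1"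
  by (simp add: ordered_choice_prob_def)

lemma ordered_choice_prob_Cons:
  "ordered_choice_prob q E (x # xs) = pmf (q E) (Some x) * ordered_choice_prob q (insert x E) xs"
  by (simp add: ordered_choice_prob_def prod.lessThan_Suc_shift del: prod.lessThan_Suc)

definition completion_weight :: "nat \<Rightarrow> (nat set \<Rightarrow> nat option pmf) \<Rightarrow> nat set \<Rightarrow> nat set \<Rightarrow> real" where
  "completion_weight m q E \<epsilon> = (if E \<subseteq> \<epsilon> \<and> \<epsilon> \<subseteq> {1..m} then
      (\<Sum>xs\<in>permutations_of_set (\<epsilon> - E). ordered_choice_prob q E xs) * pmf (q \<epsilon>) None
     else 0)"

lemma sum_permutations_of_set_nonempty:
  assumes "finite A" and "A \<noteq> {}"
  shows "(\<Sum>xs\<in>permutations_of_set A. f xs) = (\<Sum>x\<in>A. \<Sum>ys\<in>permutations_of_set (A - {x}). f (x # ys))"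
proof -
  have "(\<Sum>xs\<in>permutations_of_set A. f xs)
      = (\<Sum>x\<in>A. \<Sum>xs\<in>(\<lambda>xs. x # xs) ` permutations_of_set (A - {x}). f xs)"
    unfolding permutations_of_set_nonempty[OF assms(2)]
    by (rule sum.UNION_disjoint) (use assms(1) in auto)
  also have "\<dots> = (\<Sum>x\<in>A. \<Sum>ys\<in>permutations_of_set (A - {x}). f (x # ys))"
    by (rule sum.cong[OF refl]) (simp add: sum.reindex inj_on_def)
  finally show ?thesis .
qed

lemma completion_weight_rec:
  assumes "E \<subseteq> {1..m}"
  shows "completion_weight m q E \<epsilon> = (if \<epsilon> = E then pmf (q E) None else 0)
           + (\<Sum>i\<in>{1..m} - E. pmf (q E) (Some i) * completion_weight m q (insert i E) \<epsilon>)"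
proof (cases "E \<subset> \<epsilon> \<and> \<epsilon> \<subseteq> {1..m}")
  case False
  then have "completion_weight m q (insert i E) \<epsilon> = 0" if "i \<notin> E" for i
    using that by (auto simp: completion_weight_def)
  then show ?thesis
    using False assms by (auto simp: completion_weight_def)
next
  case True
  then have fin: "finite \<epsilon>" and ne: "\<epsilon> - E \<noteq> {}"
    using finite_subset by auto
  have "(\<Sum>i\<in>{1..m} - E. pmf (q E) (Some i) * completion_weight m q (insert i E) \<epsilon>)
      = (\<Sum>i\<in>\<epsilon> - E. pmf (q E) (Some i) * completion_weight m q (insert i E) \<epsilon>)"
    by (rule sum.mono_neutral_right) (use True in \<open>auto simp: completion_weight_def\<close>)
  also have "\<dots> = (\<Sum>i\<in>\<epsilon> - E. \<Sum>ys\<in>permutations_of_set (\<epsilon> - E - {i}).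
                      ordered_choice_prob q E (i # ys)) * pmf (q \<epsilon>) None"
    unfolding sum_distrib_right
    using True by (intro sum.cong refl)
      (auto simp: completion_weight_def ordered_choice_prob_Cons sum_distrib_left sum_distrib_right
         mult.assoc Diff_insert[symmetric])
  also have "\<dots> = completion_weight m q E \<epsilon>"
    using True fin ne by (auto simp: completion_weight_def sum_permutations_of_set_nonempty)
  finally show ?thesis
    using True by auto
qed

lemma agent_steps_Suc_unfinished:
  "map_pmf fst (agent_steps q (Suc k) (E, False)) =
     bind_pmf (q E) (\<lambda>a. case a of None \<Rightarrow> return_pmf E
                                  | Some i \<Rightarrow> map_pmf fst (agent_steps q k (insert i E, False)))"
proof -
  have "agent_step q (E, False) =
          map_pmf (\<lambda>a. case a of None \<Rightarrow> (E, True) | Some i \<Rightarrow> (insert i E, False)) (q E)"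
    unfolding agent_step_def by (intro map_pmf_cong) (auto split: option.split)
  then have "map_pmf fst (agent_steps q (Suc k) (E, False)) =
      bind_pmf (q E) (\<lambda>a. map_pmf fst (agent_steps q k
        (case a of None \<Rightarrow> (E, True) | Some i \<Rightarrow> (insert i E, False))))"
    by (simp add: map_bind_pmf bind_map_pmf o_def)
  also have "\<dots> = bind_pmf (q E) (\<lambda>a. case a of None \<Rightarrow> return_pmf E
                                  | Some i \<Rightarrow> map_pmf fst (agent_steps q k (insert i E, False)))"
    by (intro bind_pmf_cong refl) (simp add: agent_steps_finished split: option.split)
  finally show ?thesis .
qed

lemma pmf_agent_steps:
  assumes valid: "\<And>E. E \<subseteq> {1..m} \<Longrightarrow> set_pmf (q E) \<subseteq> insert None (Some ` ({1..m} - E))"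
  shows "E \<subseteq> {1..m} \<Longrightarrow> card ({1..m} - E) < k \<Longrightarrow>
         pmf (map_pmf fst (agent_steps q k (E, False))) \<epsilon> = completion_weight m q E \<epsilon>"
proof (induction k arbitrary: E)
  case 0
  then show ?case by simp
next
  case (Suc k)
  have IH: "pmf (map_pmf fst (agent_steps q k (insert i E, False))) \<epsilon> = completion_weight m q (insert i E) \<epsilon>"
    if "i \<in> {1..m} - E" for i
  proof (rule Suc.IH)
    show "insert i E \<subseteq> {1..m}" using that Suc.prems(1) by blast
    have "card ({1..m} - insert i E) < card ({1..m} - E)"
      by (intro psubset_card_mono finite_Diff finite_atLeastAtMost) (use that in blast)
    then show "card ({1..m} - insert i E) < k" using Suc.prems(2) by linarith
  qed
  let ?next = "\<lambda>a. pmf (case a of None \<Rightarrow> return_pmf E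
                    | Some i \<Rightarrow> map_pmf fst (agent_steps q k (insert i E, False))) \<epsilon>"
  have "pmf (map_pmf fst (agent_steps q (Suc k) (E, False))) \<epsilon>
      = (\<Sum>a\<in>insert None (Some ` ({1..m} - E)). ?next a * pmf (q E) a)"
    unfolding agent_steps_Suc_unfinished pmf_bind
    by (rule integral_measure_pmf_real) (use valid[OF Suc.prems(1)] in auto)
  also have "\<dots> = (if \<epsilon> = E then pmf (q E) None else 0)
           + (\<Sum>i\<in>{1..m} - E. pmf (q E) (Some i) * completion_weight m q (insert i E) \<epsilon>)"
    by (simp add: sum.reindex IH pmf_return mult.commute)
  also have "\<dots> = completion_weight m q E \<epsilon>"
    by (rule completion_weight_rec[OF Suc.prems(1), symmetric])
  finally show ?case .
qed

text \<open>Agents \<open>j \<ge> n\<close> are mapped to \<open>({}, False)\<close>, the default value of the \<open>Pi_pmf\<close> below.\<close>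

definition agent_states :: "nat \<Rightarrow> jact \<times> (nat \<Rightarrow> bool) \<Rightarrow> nat \<Rightarrow> nat set \<times> bool" where
  "agent_states n st = (\<lambda>j. if j < n then (fst st j, snd st j) else ({}, False))"

lemma micro_step_agent_states:
  "map_pmf (agent_states n) (micro_step n \<pi>' \<omega> st) =
     Pi_pmf {..<n} ({}, False) (\<lambda>j. agent_step (\<pi>' j (\<omega> j)) (agent_states n st j))"
proof -
  define D where "D = (\<lambda>j. if snd st j then return_pmf None else \<pi>' j (\<omega> j) (fst st j))"
  define G where "G = (\<lambda>j a. (case a of Some i \<Rightarrow> insert i (fst st j) | None \<Rightarrow> fst st j, snd st j \<or> a = None))"
  have "Pi_pmf {..<n} ({}, False) (\<lambda>j. agent_step (\<pi>' j (\<omega> j)) (agent_states n st j))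
      = Pi_pmf {..<n} ({}, False) (\<lambda>j. bind_pmf (D j) (\<lambda>a. return_pmf (G j a)))"
    by (intro Pi_pmf_cong refl)
      (simp add: agent_step_def agent_states_def D_def G_def map_pmf_def cong: option.case_cong)
  also have "\<dots> = bind_pmf (Pi_pmf {..<n} None D) (\<lambda>f. Pi_pmf {..<n} ({}, False) (\<lambda>j. return_pmf (G j (f j))))"
    by (rule Pi_pmf_bind) simp
  also have "\<dots> = bind_pmf (Pi_pmf {..<n} None D)
                    (\<lambda>f. return_pmf (\<lambda>j. if j \<in> {..<n} then G j (f j) else ({}, False)))"
    by (subst Pi_pmf_return_pmf) simp_all
  also have "\<dots> = map_pmf (agent_states n) (micro_step n \<pi>' \<omega> st)"
    unfolding micro_step_def pmf.map_comp D_def[symmetric] map_pmf_def[symmetric]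
    by (intro map_pmf_cong refl) (auto simp: agent_states_def G_def fun_eq_iff split: option.split)
  finally show ?thesis by simp
qed

lemma micro_steps_agent_states:
  "map_pmf (agent_states n) (micro_steps n \<pi>' \<omega> k st) =
     Pi_pmf {..<n} ({}, False) (\<lambda>j. agent_steps (\<pi>' j (\<omega> j)) k (agent_states n st j))"
proof (induction k arbitrary: st)
  case 0
  have "(\<lambda>j. if j \<in> {..<n} then agent_states n st j else ({}, False)) = agent_states n st"
    by (auto simp: agent_states_def fun_eq_iff)
  then show ?case by simp
next
  case (Suc k)
  have "map_pmf (agent_states n) (micro_steps n \<pi>' \<omega> (Suc k) st)
      = bind_pmf (map_pmf (agent_states n) (micro_step n \<pi>' \<omega> st))
          (\<lambda>f. Pi_pmf {..<n} ({}, False) (\<lambda>j. agent_steps (\<pi>' j (\<omega> j)) k (f j)))"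
    by (simp add: map_bind_pmf bind_map_pmf o_def Suc.IH)
  also have "\<dots> = Pi_pmf {..<n} ({}, False)
       (\<lambda>j. bind_pmf (agent_step (\<pi>' j (\<omega> j)) (agent_states n st j)) (agent_steps (\<pi>' j (\<omega> j)) k))"
    unfolding micro_step_agent_states by (rule Pi_pmf_bind[symmetric]) simp
  finally show ?case by simp
qed

lemma micro_steps_selection_inactive:
  "st' \<in> set_pmf (micro_steps n \<pi>' \<omega> k st) \<Longrightarrow> n \<le> j \<Longrightarrow> fst st' j = fst st j"
proof (induction k arbitrary: st)
  case 0
  then show ?case by simp
next
  case (Suc k)
  from Suc.prems obtain s where s: "s \<in> set_pmf (micro_step n \<pi>' \<omega> st)"
    and st': "st' \<in> set_pmf (micro_steps n \<pi>' \<omega> k s)" by auto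
  from s obtain a where a: "a \<in> set_pmf (Pi_pmf {..<n} None
          (\<lambda>j. if snd st j then return_pmf None else \<pi>' j (\<omega> j) (fst st j)))"
    and sa: "s = (\<lambda>j. case a j of Some i \<Rightarrow> insert i (fst st j) | None \<Rightarrow> fst st j,
                    \<lambda>j. snd st j \<or> a j = None)"
    unfolding micro_step_def by auto
  have "a j = None"
    using set_Pi_pmf_subset[of "{..<n}" None] a Suc.prems(2) by force
  then show ?case
    using Suc.IH[OF st' Suc.prems(2)] sa by simp
qed

lemma phi_eq_agent_steps:
  assumes "valid_policy' n m \<pi>'" and "j < n"
  shows "phi m \<pi>' j w = map_pmf fst (agent_steps (\<pi>' j w) (Suc m) ({}, False))"
proof -
  have valid: "\<And>E. E \<subseteq> {1..m} \<Longrightarrow> set_pmf (\<pi>' j w E) \<subseteq> insert None (Some ` ({1..m} - E))"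
    using assms unfolding valid_policy'_def by blast
  have "phi_weight m \<pi>' j w = pmf (map_pmf fst (agent_steps (\<pi>' j w) (Suc m) ({}, False)))"
  proof
    fix \<epsilon>
    show "phi_weight m \<pi>' j w \<epsilon> = pmf (map_pmf fst (agent_steps (\<pi>' j w) (Suc m) ({}, False))) \<epsilon>"
      by (subst pmf_agent_steps[OF valid])
        (simp_all add: completion_weight_def ordered_choice_prob_def phi_weight_def)
  qed
  then show ?thesis
    unfolding phi_def by (simp add: type_definition.Rep_inverse[OF td_pmf_embed_pmf])
qed

lemma joint_action_M'_eq_joint_action_M:
  assumes "valid_policy' n m \<pi>'"
  shows "joint_action_M' n m \<pi>' \<omega> = joint_action_M n (phi m \<pi>') \<omega>"
proof -
  let ?st0 = "((\<lambda>_. {}) :: jact, (\<lambda>_. False) :: nat \<Rightarrow> bool)"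
  let ?run = "micro_steps n \<pi>' \<omega> (Suc m) ?st0"
  have start: "agent_states n ?st0 = (\<lambda>_. ({}, False))"
    by (auto simp: agent_states_def fun_eq_iff)
  have "fst st = fst \<circ> agent_states n st" if "st \<in> set_pmf ?run" for st
    using micro_steps_selection_inactive[OF that] by (auto simp: agent_states_def fun_eq_iff)
  then have "joint_action_M' n m \<pi>' \<omega> = map_pmf (\<lambda>f. fst \<circ> f) (map_pmf (agent_states n) ?run)"
    unfolding joint_action_M'_def pmf.map_comp by (intro map_pmf_cong) auto
  also have "map_pmf (agent_states n) ?run
      = Pi_pmf {..<n} ({}, False) (\<lambda>j. agent_steps (\<pi>' j (\<omega> j)) (Suc m) ({}, False))"
    by (simp only: micro_steps_agent_states start)
  also have "map_pmf (\<lambda>f. fst \<circ> f) \<dots>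
      = Pi_pmf {..<n} {} (\<lambda>j. map_pmf fst (agent_steps (\<pi>' j (\<omega> j)) (Suc m) ({}, False)))"
    by (rule Pi_pmf_map[symmetric]) simp_all
  also have "\<dots> = Pi_pmf {..<n} {} (\<lambda>j. phi m \<pi>' j (\<omega> j))"
    by (intro Pi_pmf_cong refl) (simp add: phi_eq_agent_steps[OF assms])
  finally show ?thesis
    unfolding joint_action_M_def .
qed

theorem lemma1:
  fixes n m T :: nat
    and \<rho> :: "'s::finite pmf"
    and Obs :: "'s \<Rightarrow> ('o::finite) obs pmf"
    and P :: "'s \<Rightarrow> jact \<Rightarrow> 's pmf"
    and R :: "'s \<Rightarrow> jact \<Rightarrow> 's \<Rightarrow> real"
    and \<pi>' :: "nat \<Rightarrow> 'o \<Rightarrow> nat set \<Rightarrow> nat option pmf"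
  assumes "n \<ge> 1" and "m \<ge> 1" and "T \<ge> 1"
    and "valid_policy' n m \<pi>'"
  shows "V_M' n m T \<rho> Obs P R \<pi>' = V_M n T \<rho> Obs P R (phi m \<pi>')"
proof -
  have "joint_action_M' n m \<pi>' = joint_action_M n (phi m \<pi>')"
    using joint_action_M'_eq_joint_action_M[OF assms(4)] by blast
  then show ?thesis
    unfolding V_M'_def V_M_def by simp
qed

end
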